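(* Let $M$ be a matroid on $E$ whose dual is transversal with maximal presentation $\mathcal A=(A_1,\ldots,A_r)$, $r=r^*(M)$; let $e\in E$, ordered so that for some $k\in[r]$, $e\in A_i$ iff $i\le k$. Let $G$ be a minimal $(e,\mathcal A)$-presenting graph on vertex set $[k]$ for which the identity map is the presenting map. If $G$ is a tree with edge set $\{\{i_1,j_1\},\ldots,\{i_{k-1},j_{k-1}\}\}$, then $$(\mathrm{cl}_{M\backslash e}(A_{i_1}\cup A_{j_1}-e),\ldots,\mathrm{cl}_{M\backslash e}(A_{i_{k-1}}\cup A_{j_{k-1}}-e),A_{k+1},\ldots,A_r)$$ is a presentation of $(M\backslash e)^*$.
   Context: $M^*=M[\mathcal A]$, the transversal matroid whose independent sets are the partial transversals of $\mathcal A$; the presentation is maximal if every $A_i$ is a cyclic flat of $M$ (a flat that is a union of circuits). For $X\subseteq E$: $\mathcal A(X)=\{i:A_i\subseteq X\}$, $\mathcal A_e(X)=\{i\in\mathcal A(X): e\in A_i\}$, and $G[U]$ is the induced subgraph on $U$. A graph with vertex set $\mathcal A_e(E)=[k]$ is $(e,\mathcal A)$-presenting if for all distinct $i,j$ the graph $G[\mathcal A_e(\mathrm{cl}_M(A_i\cup A_j))]$ is connected; minimal if deleting any one edge destroys this property. *)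

theory Defs
  imports Main
begin

definition matroid :: "'a set \<Rightarrow> ('a set \<Rightarrow> bool) \<Rightarrow> bool" where
  "matroid E indep \<longleftrightarrow>
     finite E \<and> indep {} \<and>
     (\<forall>X. indep X \<longrightarrow> X \<subseteq> E) \<and>
     (\<forall>X Y. indep Y \<and> X \<subseteq> Y \<longrightarrow> indep X) \<and>
     (\<forall>X Y. indep X \<and> indep Y \<and> card X < card Y \<longrightarrow> (\<exists>y\<in>Y - X. indep (insert y X)))"

definition mrank :: "('a set \<Rightarrow> bool) \<Rightarrow> 'a set \<Rightarrow> nat" where
  "mrank indep X = Max {card I | I. I \<subseteq> X \<and> indep I}"

definition mcl :: "'a set \<Rightarrow> ('a set \<Rightarrow> bool) \<Rightarrow> 'a set \<Rightarrow> 'a set" where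
  "mcl E indep X = {x \<in> E. mrank indep (insert x X) = mrank indep X}"

text \<open>Dual matroid: X is independent in M* iff E - X is spanning in M.\<close>
definition dual_indep :: "'a set \<Rightarrow> ('a set \<Rightarrow> bool) \<Rightarrow> 'a set \<Rightarrow> bool" where
  "dual_indep E indep X \<longleftrightarrow> X \<subseteq> E \<and> mrank indep (E - X) = mrank indep E"

text \<open>Deletion M \ e (ground set E - {e}).\<close>
definition del_indep :: "('a set \<Rightarrow> bool) \<Rightarrow> 'a \<Rightarrow> 'a set \<Rightarrow> bool" where
  "del_indep indep e X \<longleftrightarrow> indep X \<and> e \<notin> X"

definition circuit :: "'a set \<Rightarrow> ('a set \<Rightarrow> bool) \<Rightarrow> 'a set \<Rightarrow> bool" where
  "circuit E indep C \<longleftrightarrow> C \<subseteq> E \<and> \<not> indep C \<and> (\<forall>x\<in>C. indep (C - {x}))"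

definition cyclic_flat :: "'a set \<Rightarrow> ('a set \<Rightarrow> bool) \<Rightarrow> 'a set \<Rightarrow> bool" where
  "cyclic_flat E indep F \<longleftrightarrow> F \<subseteq> E \<and> mcl E indep F = F \<and>
     F = \<Union>{C. circuit E indep C \<and> C \<subseteq> F}"

text \<open>Set systems (A_1,...,A_r) are functions on indices 1..r.\<close>
definition partial_transversal :: "(nat \<Rightarrow> 'a set) \<Rightarrow> nat \<Rightarrow> 'a set \<Rightarrow> bool" where
  "partial_transversal A r X \<longleftrightarrow>
     finite X \<and> (\<exists>\<phi>. inj_on \<phi> X \<and> (\<forall>x\<in>X. \<phi> x \<in> {1..r} \<and> x \<in> A (\<phi> x)))"

definition is_presentation :: "'a set \<Rightarrow> ('a set \<Rightarrow> bool) \<Rightarrow> (nat \<Rightarrow> 'a set) \<Rightarrow> nat \<Rightarrow> bool" where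
  "is_presentation E indep A r \<longleftrightarrow>
     (\<forall>i\<in>{1..r}. A i \<subseteq> E) \<and> (\<forall>X. indep X \<longleftrightarrow> X \<subseteq> E \<and> partial_transversal A r X)"

definition maximal_presentation_of_dual ::
  "'a set \<Rightarrow> ('a set \<Rightarrow> bool) \<Rightarrow> (nat \<Rightarrow> 'a set) \<Rightarrow> nat \<Rightarrow> bool" where
  "maximal_presentation_of_dual E indep A r \<longleftrightarrow>
     is_presentation E (dual_indep E indep) A r \<and> (\<forall>i\<in>{1..r}. cyclic_flat E indep (A i))"

definition Ae :: "(nat \<Rightarrow> 'a set) \<Rightarrow> nat \<Rightarrow> 'a \<Rightarrow> 'a set \<Rightarrow> nat set" where
  "Ae A r e X = {i \<in> {1..r}. A i \<subseteq> X \<and> e \<in> A i}"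

definition graph_on :: "nat set \<Rightarrow> nat set set \<Rightarrow> bool" where
  "graph_on V Ed \<longleftrightarrow> (\<forall>x\<in>Ed. \<exists>u v. x = {u, v} \<and> u \<noteq> v \<and> u \<in> V \<and> v \<in> V)"

definition induced_adj :: "nat set set \<Rightarrow> nat set \<Rightarrow> (nat \<times> nat) set" where
  "induced_adj Ed U = {(u, v). u \<in> U \<and> v \<in> U \<and> {u, v} \<in> Ed}"

definition connected_induced :: "nat set set \<Rightarrow> nat set \<Rightarrow> bool" where
  "connected_induced Ed U \<longleftrightarrow> (\<forall>u\<in>U. \<forall>v\<in>U. (u, v) \<in> (induced_adj Ed U)\<^sup>*)"

definition has_cycle :: "nat set \<Rightarrow> nat set set \<Rightarrow> bool" where
  "has_cycle V Ed \<longleftrightarrow> (\<exists>vs. length vs \<ge> 3 \<and> distinct vs \<and> set vs \<subseteq> V \<and>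
      (\<forall>t < length vs. {vs ! t, vs ! ((t + 1) mod length vs)} \<in> Ed))"

definition is_tree :: "nat set \<Rightarrow> nat set set \<Rightarrow> bool" where
  "is_tree V Ed \<longleftrightarrow> graph_on V Ed \<and> V \<noteq> {} \<and> connected_induced Ed V \<and> \<not> has_cycle V Ed"

definition presenting :: "'a set \<Rightarrow> ('a set \<Rightarrow> bool) \<Rightarrow> (nat \<Rightarrow> 'a set) \<Rightarrow> nat \<Rightarrow> 'a \<Rightarrow> nat \<Rightarrow> nat set set \<Rightarrow> bool" where
  "presenting E indep A r e k Ed \<longleftrightarrow> graph_on {1..k} Ed \<and>
     (\<forall>i\<in>{1..k}. \<forall>j\<in>{1..k}. i \<noteq> j \<longrightarrow>
        connected_induced Ed (Ae A r e (mcl E indep (A i \<union> A j))))"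

definition minimal_presenting :: "'a set \<Rightarrow> ('a set \<Rightarrow> bool) \<Rightarrow> (nat \<Rightarrow> 'a set) \<Rightarrow> nat \<Rightarrow> 'a \<Rightarrow> nat \<Rightarrow> nat set set \<Rightarrow> bool" where
  "minimal_presenting E indep A r e k Ed \<longleftrightarrow> presenting E indep A r e k Ed \<and>
     (\<forall>x\<in>Ed. \<not> presenting E indep A r e k (Ed - {x}))"

end

(* Since e lies in A_1 it is not a coloop of M, so (M\e)* = M*/e: a set X of E - e is
   coindependent in M\e iff X + e is a partial transversal of A.  In a matching of X + e the
   element e uses some A_p with p <= k; orienting the tree G towards p assigns to every other
   vertex v <= k a distinct edge {i, j} at v, and A_v - e lies in cl(A_i u A_j - e), so X is
   matched by the new system.  Conversely, if X + e is not matchable, Hall's theorem gives a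
   minimal unmatchable C in X + e with fewer than |C| neighbours in A.  If e is in C, the k sets
   containing e are all neighbours of C and are replaced by only k - 1 sets.  If not, C is a
   circuit of M*, so E - C is a flat of M; the vertices a <= k with A_a inside E - C induce a
   connected subgraph of G because G is presenting, and the edges of a spanning tree of it give
   new sets inside E - C.  In both cases C - e has too few neighbours in the new system. *)

theory Submission
  imports Defs
begin

section \<open>Rank and closure\<close>

context
  fixes E :: "'a set" and indep :: "'a set \<Rightarrow> bool"
  assumes matroid: "matroid E indep"
begin

lemma matroid_indep_finite: "indep I \<Longrightarrow> finite I"
  using matroid unfolding matroid_def by (meson finite_subset)

lemma matroid_indep_subset: "indep J \<Longrightarrow> I \<subseteq> J \<Longrightarrow> indep I"
  using matroid unfolding matroid_def by blast

lemma matroid_augment: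
  "indep I \<Longrightarrow> indep J \<Longrightarrow> card I < card J \<Longrightarrow> \<exists>y\<in>J - I. indep (insert y I)"
  using matroid unfolding matroid_def by blast

lemma matroid_indep_ground: "indep I \<Longrightarrow> I \<subseteq> E"
  using matroid unfolding matroid_def by blast

lemma finite_rank_candidates:
  "finite {card I | I. I \<subseteq> X \<and> indep I}" "{card I | I. I \<subseteq> X \<and> indep I} \<noteq> {}"
proof -
  have "{card I | I. I \<subseteq> X \<and> indep I} \<subseteq> card ` Pow E"
    using matroid_indep_ground by blast
  moreover have "finite E" "indep {}" using matroid unfolding matroid_def by simp_all
  ultimately show "finite {card I | I. I \<subseteq> X \<and> indep I}" "{card I | I. I \<subseteq> X \<and> indep I} \<noteq> {}"
    by (simp_all add: finite_subset) blast
qed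

lemma card_le_mrank: "indep I \<Longrightarrow> I \<subseteq> X \<Longrightarrow> card I \<le> mrank indep X"
  unfolding mrank_def by (intro Max_ge finite_rank_candidates) blast

lemma mrank_witness: "\<exists>I. I \<subseteq> X \<and> indep I \<and> card I = mrank indep X"
proof -
  have "mrank indep X \<in> {card I | I. I \<subseteq> X \<and> indep I}"
    unfolding mrank_def by (intro Max_in finite_rank_candidates)
  then show ?thesis by auto
qed

lemma mrank_mono:
  assumes "X \<subseteq> Y"
  shows "mrank indep X \<le> mrank indep Y"
proof -
  obtain I where "I \<subseteq> X" "indep I" "card I = mrank indep X" using mrank_witness[of X] by blast
  then show ?thesis using card_le_mrank[of I Y] assms by simp
qed

lemma indep_extends_to_rank:
  "indep I \<Longrightarrow> I \<subseteq> X \<Longrightarrow> \<exists>J. I \<subseteq> J \<and> J \<subseteq> X \<and> indep J \<and> card J = mrank indep X"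
proof (induction "mrank indep X - card I" arbitrary: I rule: less_induct)
  case less
  show ?case
  proof (cases "card I < mrank indep X")
    case False
    then have "card I = mrank indep X" using card_le_mrank[OF less.prems] by simp
    then show ?thesis using less.prems by blast
  next
    case True
    obtain K where K: "K \<subseteq> X" "indep K" "card K = mrank indep X" using mrank_witness[of X] by blast
    then obtain y where y: "y \<in> K - I" "indep (insert y I)"
      using matroid_augment[OF less.prems(1) K(2)] True by auto
    have "card (insert y I) = Suc (card I)"
      using y(1) matroid_indep_finite[OF less.prems(1)] by simp
    then have "mrank indep X - card (insert y I) < mrank indep X - card I" using True by simp
    moreover have "insert y I \<subseteq> X" using y(1) K(1) less.prems(2) by blast
    ultimately show ?thesis using less.hyps[OF _ y(2)] by blast
  qed
qed

lemma mrank_insert_eq_mono: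
  assumes "F \<subseteq> W" and "mrank indep (insert c F) = mrank indep F"
  shows "mrank indep (insert c W) = mrank indep W"
proof (rule ccontr)
  \<comment> \<open>Extend a basis I of F to a basis J of W and augment J from a basis of insert c W:
    the new element must be c, and then insert c I beats the rank of insert c F.\<close>
  assume ne: "mrank indep (insert c W) \<noteq> mrank indep W"
  then have "c \<notin> W" by (auto simp: insert_absorb)
  have "mrank indep W \<le> mrank indep (insert c W)" by (rule mrank_mono) (rule subset_insertI)
  then have gt: "mrank indep W < mrank indep (insert c W)" using ne by linarith
  obtain I where I: "I \<subseteq> F" "indep I" "card I = mrank indep F"
    using mrank_witness[of F] by blast
  have "I \<subseteq> W" using I(1) assms(1) by (rule subset_trans)
  then obtain J where J: "I \<subseteq> J" "J \<subseteq> W" "indep J" "card J = mrank indep W"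
    using indep_extends_to_rank[OF I(2) \<open>I \<subseteq> W\<close>] by blast
  obtain K where K: "K \<subseteq> insert c W" "indep K" "card K = mrank indep (insert c W)"
    using mrank_witness[of "insert c W"] by blast
  have "card J < card K" using gt J(4) K(3) by simp
  then obtain y where y: "y \<in> K - J" "indep (insert y J)"
    using matroid_augment[OF J(3) K(2)] by blast
  have "finite J" using matroid_indep_finite[OF J(3)] .
  show False
  proof (cases "y = c")
    case False
    then have "insert y J \<subseteq> W" using y(1) K(1) J(2) by blast
    from card_le_mrank[OF y(2) this] show False using y(1) \<open>finite J\<close> J(4) by simp
  next
    case True
    have "indep (insert c I)" using matroid_indep_subset[OF y(2)] True J(1) by blast
    moreover have "insert c I \<subseteq> insert c F" using I(1) by blast
    ultimately have "card (insert c I) \<le> mrank indep (insert c F)" by (rule card_le_mrank)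
    moreover have "c \<notin> I" using \<open>c \<notin> W\<close> \<open>I \<subseteq> W\<close> by blast
    ultimately show False using assms(2) I(3) matroid_indep_finite[OF I(2)] by simp
  qed
qed

lemma mcl_mono: "F \<subseteq> W \<Longrightarrow> mcl E indep F \<subseteq> mcl E indep W"
  unfolding mcl_def using mrank_insert_eq_mono by auto

end

lemma mcl_superset: "F \<subseteq> E \<Longrightarrow> F \<subseteq> mcl E indep F"
  unfolding mcl_def by (auto simp: insert_absorb)

lemma mrank_del_indep: "e \<notin> Z \<Longrightarrow> mrank (del_indep indep e) Z = mrank indep Z"
  unfolding mrank_def del_indep_def by (intro arg_cong[where f = Max]) blast

lemma mcl_del_indep_subset:
  "e \<notin> Y \<Longrightarrow> mcl (E - {e}) (del_indep indep e) Y \<subseteq> mcl E indep Y"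
  unfolding mcl_def by (auto simp: mrank_del_indep)

lemma dual_indep_del_iff:
  assumes "dual_indep E indep {e}" and "X \<subseteq> E - {e}"
  shows "dual_indep (E - {e}) (del_indep indep e) X \<longleftrightarrow> dual_indep E indep (insert e X)"
proof -
  have "E - {e} - X = E - insert e X" by blast
  moreover have "mrank indep (E - {e}) = mrank indep E" and "e \<in> E"
    using assms(1) unfolding dual_indep_def by auto
  ultimately show ?thesis
    using assms(2) unfolding dual_indep_def by (auto simp: mrank_del_indep)
qed

lemma mcl_compl_dual_circuit:
  assumes "circuit E (dual_indep E indep) C"
  shows "mcl E indep (E - C) \<subseteq> E - C"
proof
  fix x assume x: "x \<in> mcl E indep (E - C)"
  show "x \<in> E - C"
  proof (rule ccontr)
    assume "x \<notin> E - C"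
    with x have "x \<in> C" "mrank indep (insert x (E - C)) = mrank indep (E - C)"
      unfolding mcl_def by auto
    moreover have "E - (C - {x}) = insert x (E - C)" using \<open>x \<in> C\<close> assms
      unfolding circuit_def by blast
    ultimately show False using assms unfolding circuit_def dual_indep_def by auto
  qed
qed

section \<open>Partial transversals and Hall's theorem\<close>

definition partial_transversal_on :: "('i \<Rightarrow> 'a set) \<Rightarrow> 'i set \<Rightarrow> 'a set \<Rightarrow> bool" where
  "partial_transversal_on A T X \<longleftrightarrow> (\<exists>\<phi>. inj_on \<phi> X \<and> (\<forall>x\<in>X. \<phi> x \<in> T \<and> x \<in> A (\<phi> x)))"

definition neighbours :: "('i \<Rightarrow> 'a set) \<Rightarrow> 'i set \<Rightarrow> 'a set \<Rightarrow> 'i set" where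
  "neighbours A T Y = {t \<in> T. A t \<inter> Y \<noteq> {}}"

definition hall_condition :: "('i \<Rightarrow> 'a set) \<Rightarrow> 'i set \<Rightarrow> 'a set \<Rightarrow> bool" where
  "hall_condition A T X \<longleftrightarrow> (\<forall>Y\<subseteq>X. card Y \<le> card (neighbours A T Y))"

lemma partial_transversal_iff:
  "partial_transversal A r X \<longleftrightarrow> finite X \<and> partial_transversal_on A {1..r} X"
  unfolding partial_transversal_def partial_transversal_on_def by auto

lemma partial_transversal_on_subset:
  "partial_transversal_on A T X \<Longrightarrow> Y \<subseteq> X \<Longrightarrow> partial_transversal_on A T Y"
  unfolding partial_transversal_on_def by (meson inj_on_subset subsetD)

lemma partial_transversal_on_neighbours:
  "partial_transversal_on A T Y \<Longrightarrow> partial_transversal_on A (neighbours A T Y) Y"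
  unfolding partial_transversal_on_def neighbours_def by blast

lemma partial_transversal_on_Un:
  assumes "T1 \<inter> T2 = {}"
    and "partial_transversal_on A T1 X1" and "partial_transversal_on A T2 X2"
  shows "partial_transversal_on A (T1 \<union> T2) (X1 \<union> X2)"
proof -
  obtain \<phi>1 \<phi>2 where \<phi>1: "inj_on \<phi>1 X1" "\<forall>x\<in>X1. \<phi>1 x \<in> T1 \<and> x \<in> A (\<phi>1 x)"
    and \<phi>2: "inj_on \<phi>2 X2" "\<forall>x\<in>X2. \<phi>2 x \<in> T2 \<and> x \<in> A (\<phi>2 x)"
    using assms(2,3) unfolding partial_transversal_on_def by blast
  define \<phi> where "\<phi> x = (if x \<in> X1 then \<phi>1 x else \<phi>2 x)" for x
  have "inj_on \<phi> (X1 \<union> X2)"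
    using \<phi>1 \<phi>2 assms(1) unfolding \<phi>_def inj_on_def by (smt (verit) Un_iff disjoint_iff)
  moreover have "\<forall>x\<in>X1 \<union> X2. \<phi> x \<in> T1 \<union> T2 \<and> x \<in> A (\<phi> x)"
    using \<phi>1(2) \<phi>2(2) unfolding \<phi>_def by auto
  ultimately show ?thesis unfolding partial_transversal_on_def by blast
qed

lemma partial_transversal_on_insert:
  assumes "t \<in> T" and "x \<in> A t" and "partial_transversal_on A (T - {t}) X"
  shows "partial_transversal_on A T (insert x X)"
proof -
  have "partial_transversal_on A {t} {x}"
    using assms(2) unfolding partial_transversal_on_def by auto
  from partial_transversal_on_Un[OF _ this assms(3)] show ?thesis
    using assms(1) by (simp add: insert_absorb)
qed

lemma card_le_card_neighbours:
  assumes "finite T" and "partial_transversal_on A T X" and "Y \<subseteq> X"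
  shows "card Y \<le> card (neighbours A T Y)"
proof -
  obtain \<phi> where "inj_on \<phi> Y" "\<phi> ` Y \<subseteq> neighbours A T Y"
    using partial_transversal_on_neighbours[OF partial_transversal_on_subset[OF assms(2,3)]]
    unfolding partial_transversal_on_def by blast
  moreover have "finite (neighbours A T Y)" using assms(1) unfolding neighbours_def by simp
  ultimately show ?thesis by (meson card_inj_on_le)
qed

lemma hall_conditionD: "hall_condition A T X \<Longrightarrow> Y \<subseteq> X \<Longrightarrow> card Y \<le> card (neighbours A T Y)"
  unfolding hall_condition_def by blast

lemma hall_condition_subset: "hall_condition A T X \<Longrightarrow> Y \<subseteq> X \<Longrightarrow> hall_condition A T Y"
  unfolding hall_condition_def by blast

lemma hall_condition_Diff_critical:
  assumes "finite T" and "finite X" and "hall_condition A T X"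
    and "Y0 \<subseteq> X" and "card (neighbours A T Y0) \<le> card Y0"
  shows "hall_condition A (T - neighbours A T Y0) (X - Y0)"
  unfolding hall_condition_def
proof (intro allI impI)
  fix Y assume Y: "Y \<subseteq> X - Y0"
  have "neighbours A T Y0 \<subseteq> neighbours A T (Y \<union> Y0)" and "finite (neighbours A T (Y \<union> Y0))"
    using assms(1) unfolding neighbours_def by auto
  moreover from this have "finite (neighbours A T Y0)" by (rule finite_subset)
  moreover have "neighbours A (T - neighbours A T Y0) Y = neighbours A T (Y \<union> Y0) - neighbours A T Y0"
    unfolding neighbours_def by blast
  ultimately have "card (neighbours A (T - neighbours A T Y0) Y)
      = card (neighbours A T (Y \<union> Y0)) - card (neighbours A T Y0)"
    by (simp add: card_Diff_subset)
  moreover have "finite Y" "finite Y0" using Y assms(2,4) finite_subset[of _ X] by auto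
  then have "card (Y \<union> Y0) = card Y + card Y0"
    using Y by (intro card_Un_disjoint) auto
  moreover have "card (Y \<union> Y0) \<le> card (neighbours A T (Y \<union> Y0))"
    using Y assms(4) by (intro hall_conditionD[OF assms(3)]) blast
  ultimately show "card Y \<le> card (neighbours A (T - neighbours A T Y0) Y)"
    using assms(5) by linarith
qed

lemma hall_condition_Diff_surplus:
  assumes "finite T" and "\<forall>Y. Y \<noteq> {} \<longrightarrow> Y \<subset> X \<longrightarrow> card Y < card (neighbours A T Y)"
    and "x \<in> X"
  shows "hall_condition A (T - {t}) (X - {x})"
  unfolding hall_condition_def
proof (intro allI impI)
  fix Y assume Y: "Y \<subseteq> X - {x}"
  show "card Y \<le> card (neighbours A (T - {t}) Y)"
  proof (cases "Y = {}")
    case False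
    moreover have "Y \<subset> X" using Y assms(3) by blast
    ultimately have "card Y < card (neighbours A T Y)" using assms(2) by simp
    moreover have "neighbours A (T - {t}) Y = neighbours A T Y - {t}"
      unfolding neighbours_def by blast
    ultimately show ?thesis by (cases "t \<in> neighbours A T Y") simp_all
  qed simp
qed

lemma partial_transversal_on_split:
  assumes "Y0 \<subseteq> X" and "partial_transversal_on A T Y0"
    and "partial_transversal_on A (T - neighbours A T Y0) (X - Y0)"
  shows "partial_transversal_on A T X"
proof -
  have "neighbours A T Y0 \<union> (T - neighbours A T Y0) = T" "Y0 \<union> (X - Y0) = X"
    using assms(1) unfolding neighbours_def by auto
  then show ?thesis
    using partial_transversal_on_Un[OF _ partial_transversal_on_neighbours[OF assms(2)] assms(3)]
    by simp
qed

theorem partial_transversal_on_if_hall_condition: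
  assumes "finite T" and "finite X" and "hall_condition A T X"
  shows "partial_transversal_on A T X"
  using assms
proof (induction "card X" arbitrary: X T rule: less_induct)
  \<comment> \<open>Halmos-Vaughan: split off a critical proper subset if there is one; otherwise every
    proper subset has surplus and any x may be matched to any t with x in A t.\<close>
  case less
  show ?case
  proof (cases "\<exists>Y0. Y0 \<noteq> {} \<and> Y0 \<subset> X \<and> card (neighbours A T Y0) \<le> card Y0")
    case True
    then obtain Y0 where Y0: "Y0 \<noteq> {}" "Y0 \<subset> X" "card (neighbours A T Y0) \<le> card Y0" by blast
    then have "Y0 \<subseteq> X" by blast
    have "finite Y0" using \<open>Y0 \<subseteq> X\<close> less.prems(2) by (rule finite_subset)
    have "card Y0 < card X" using less.prems(2) Y0(2) by (rule psubset_card_mono)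
    then have match_Y0: "partial_transversal_on A T Y0"
      using less \<open>Y0 \<subseteq> X\<close> \<open>finite Y0\<close> hall_condition_subset by blast
    have "card (X - Y0) < card X" using Y0(1,2) less.prems(2) by (intro psubset_card_mono) auto
    moreover have "hall_condition A (T - neighbours A T Y0) (X - Y0)"
      by (rule hall_condition_Diff_critical[OF less.prems \<open>Y0 \<subseteq> X\<close> Y0(3)])
    ultimately have "partial_transversal_on A (T - neighbours A T Y0) (X - Y0)"
      using less by simp
    then show ?thesis by (rule partial_transversal_on_split[OF \<open>Y0 \<subseteq> X\<close> match_Y0])
  next
    case no_critical: False
    show ?thesis
    proof (cases "X = {}")
      case True
      then show ?thesis unfolding partial_transversal_on_def by simp
    next
      case False
      then obtain x where x: "x \<in> X" by blast
      then have "card {x} \<le> card (neighbours A T {x})"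
        by (intro hall_conditionD[OF less.prems(3)]) simp
      then have "neighbours A T {x} \<noteq> {}" by auto
      then obtain t where t: "t \<in> T" "x \<in> A t" unfolding neighbours_def by auto
      have "card (X - {x}) < card X" using less.prems(2) x by (rule card_Diff1_less)
      moreover have "hall_condition A (T - {t}) (X - {x})"
        using hall_condition_Diff_surplus[OF less.prems(1) _ x] no_critical by (auto simp: not_le)
      ultimately have "partial_transversal_on A (T - {t}) (X - {x})"
        using less by simp
      from partial_transversal_on_insert[OF t this] show ?thesis using x by (simp add: insert_absorb)
    qed
  qed
qed

lemma minimal_non_transversal_exists:
  assumes "finite Y" and "\<not> partial_transversal_on A T Y"
  shows "\<exists>C\<subseteq>Y. \<not> partial_transversal_on A T C \<and> (\<forall>c\<in>C. partial_transversal_on A T (C - {c}))"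
proof -
  let ?D = "{C. C \<subseteq> Y \<and> \<not> partial_transversal_on A T C}"
  have "finite ?D" using assms(1) by simp
  moreover have "?D \<noteq> {}" using assms(2) by blast
  ultimately obtain C where C: "C \<in> ?D" and min: "\<forall>D\<in>?D. D \<le> C \<longrightarrow> C = D"
    by (meson finite_has_minimal)
  have "partial_transversal_on A T (C - {c})" if "c \<in> C" for c
  proof (rule ccontr)
    assume "\<not> partial_transversal_on A T (C - {c})"
    then have "C - {c} \<in> ?D" using C by auto
    from min[rule_format, OF this Diff_subset] show False using that by blast
  qed
  then show ?thesis using C by blast
qed

lemma card_neighbours_less_if_minimal_non_transversal:
  assumes "finite T" and "finite C" and "\<not> partial_transversal_on A T C"
    and "\<forall>c\<in>C. partial_transversal_on A T (C - {c})"
  shows "card (neighbours A T C) < card C"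
proof -
  have "\<not> hall_condition A T C"
    using partial_transversal_on_if_hall_condition[OF assms(1,2)] assms(3) by blast
  then obtain Z where Z: "Z \<subseteq> C" "card (neighbours A T Z) < card Z"
    by (auto simp: hall_condition_def not_le)
  show ?thesis
  proof (cases "Z = C")
    case False
    then obtain c where "c \<in> C" "Z \<subseteq> C - {c}" using Z(1) by blast
    with card_le_card_neighbours[OF assms(1)] assms(4) have "card Z \<le> card (neighbours A T Z)"
      by blast
    with Z(2) show ?thesis by simp
  qed (use Z in simp)
qed

section \<open>Deleting an element shared by the sets of a presenting tree\<close>

lemma induced_adj_rtrancl_mono:
  "U \<subseteq> P \<Longrightarrow> (a, b) \<in> (induced_adj Ed U)\<^sup>* \<Longrightarrow> (a, b) \<in> (induced_adj Ed P)\<^sup>*"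
  by (rule rtrancl_mono[THEN subsetD]) (auto simp: induced_adj_def)

lemma connected_induced_parent_edges:
  assumes conn: "connected_induced Ed U" and "p \<in> U" and Ed: "Ed = (\<lambda>t. {i t, j t}) ` T"
  obtains g where "inj_on g (U - {p})"
    and "\<forall>v\<in>U - {p}. g v \<in> T \<and> v \<in> {i (g v), j (g v)} \<and> {i (g v), j (g v)} \<subseteq> U"
proof -
  define R where "R = induced_adj Ed U"
  define d where "d v = (LEAST n. (v, p) \<in> R ^^ n)" for v
  \<comment> \<open>g v is the first edge of a shortest path from v to p; its other end w v is strictly
    closer to p, which makes g injective.\<close>
  have "\<exists>t w. t \<in> T \<and> {v, w} = {i t, j t} \<and> w \<in> U \<and> d w < d v" if v: "v \<in> U - {p}" for v
  proof -
    have "(v, p) \<in> R\<^sup>*" using conn v \<open>p \<in> U\<close> unfolding connected_induced_def R_def by blast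
    then have dv: "(v, p) \<in> R ^^ d v" unfolding d_def by (metis LeastI_ex rtrancl_power)
    moreover have "d v \<noteq> 0"
    proof
      assume "d v = 0"
      with dv v show False by simp
    qed
    ultimately obtain m w where m: "d v = Suc m" "(v, w) \<in> R" "(w, p) \<in> R ^^ m"
      by (metis not0_implies_Suc relpow_Suc_E2)
    then have "d w < d v" unfolding d_def by (metis Least_le less_Suc_eq_le)
    moreover have "w \<in> U" "{v, w} \<in> Ed" using m(2) unfolding R_def induced_adj_def by auto
    ultimately show ?thesis using Ed by blast
  qed
  then obtain g w where gw: "\<forall>v\<in>U - {p}. g v \<in> T \<and> {v, w v} = {i (g v), j (g v)} \<and> w v \<in> U \<and> d (w v) < d v"
    by metis
  have "inj_on g (U - {p})"
  proof (rule inj_onI)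
    fix v v' assume vv': "v \<in> U - {p}" "v' \<in> U - {p}" "g v = g v'"
    show "v = v'"
    proof (rule ccontr)
      assume "v \<noteq> v'"
      moreover have "{v, w v} = {v', w v'}" using gw vv' by metis
      ultimately have "v = w v'" "v' = w v" by (auto simp: doubleton_eq_iff)
      then show False using gw vv' by (metis less_asym)
    qed
  qed
  moreover have "\<forall>v\<in>U - {p}. g v \<in> T \<and> v \<in> {i (g v), j (g v)} \<and> {i (g v), j (g v)} \<subseteq> U"
    using gw by (metis (no_types, lifting) Diff_iff insert_subset insertI1 empty_subsetI)
  ultimately show ?thesis using that by blast
qed

locale tree_presentation =
  fixes E :: "'a set" and indep :: "'a set \<Rightarrow> bool" and A :: "nat \<Rightarrow> 'a set"
    and r k :: nat and e :: 'a and Ed :: "nat set set" and i j :: "nat \<Rightarrow> nat"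
  assumes matroid: "matroid E indep"
    and presentation: "is_presentation E (dual_indep E indep) A r"
    and e_in_E: "e \<in> E"
    and k_range: "1 \<le> k" "k \<le> r"
    and e_in_A_iff: "\<And>t. t \<in> {1..r} \<Longrightarrow> e \<in> A t \<longleftrightarrow> t \<le> k"
    and presenting: "presenting E indep A r e k Ed"
    and connected: "connected_induced Ed {1..k}"
    and edges: "Ed = (\<lambda>t. {i t, j t}) ` {1..k - 1}"
begin

definition B :: "nat \<Rightarrow> 'a set" where
  "B = (\<lambda>t. if t \<le> k - 1
            then mcl (E - {e}) (del_indep indep e) (A (i t) \<union> A (j t) - {e})
            else A (t + 1))"

lemma A_subset: "t \<in> {1..r} \<Longrightarrow> A t \<subseteq> E"
  using presentation unfolding is_presentation_def by blast

lemma finite_ground: "finite E"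
  using matroid unfolding matroid_def by simp

lemma dual_indep_iff: "dual_indep E indep X \<longleftrightarrow> X \<subseteq> E \<and> partial_transversal_on A {1..r} X"
proof -
  have "dual_indep E indep X \<longleftrightarrow> X \<subseteq> E \<and> partial_transversal A r X"
    using presentation unfolding is_presentation_def by simp
  then show ?thesis
    using finite_subset[OF _ finite_ground] unfolding partial_transversal_iff by blast
qed

lemma e_not_coloop: "dual_indep E indep {e}"
  unfolding dual_indep_iff partial_transversal_on_def
  using e_in_E e_in_A_iff[of 1] k_range by (auto intro!: exI[of _ "\<lambda>_. 1"])

lemma B_subset:
  assumes "t \<in> {1..r - 1}"
  shows "B t \<subseteq> E - {e}"
proof (cases "t \<le> k - 1")
  case True
  then show ?thesis unfolding B_def mcl_def by auto
next
  case False
  then have "t + 1 \<in> {1..r}" "\<not> t + 1 \<le> k" using assms k_range by auto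
  then show ?thesis using A_subset e_in_A_iff False unfolding B_def by auto
qed

lemma B_reindexing:
  assumes p: "p \<in> {1..k}"
  obtains h where "inj_on h ({1..r} - {p})"
    and "\<forall>s\<in>{1..r} - {p}. h s \<in> {1..r - 1} \<and> A s - {e} \<subseteq> B (h s)"
proof -
  obtain g where g_inj: "inj_on g ({1..k} - {p})"
    and g: "\<forall>v\<in>{1..k} - {p}. g v \<in> {1..k - 1} \<and> v \<in> {i (g v), j (g v)} \<and> {i (g v), j (g v)} \<subseteq> {1..k}"
    by (rule connected_induced_parent_edges[OF connected p edges])
  define h where "h s = (if s \<le> k then g s else s - 1)" for s
  have h_le_iff: "h s \<le> k - 1 \<longleftrightarrow> s \<le> k" if "s \<in> {1..r} - {p}" for s
    using g that k_range unfolding h_def by auto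
  have "inj_on h ({1..r} - {p})"
  proof (rule inj_onI)
    fix s s' assume s: "s \<in> {1..r} - {p}" and s': "s' \<in> {1..r} - {p}" and eq: "h s = h s'"
    then have "s \<le> k \<longleftrightarrow> s' \<le> k" using h_le_iff by metis
    then show "s = s'"
      using eq inj_onD[OF g_inj] s s' k_range unfolding h_def by (cases "s \<le> k") auto
  qed
  moreover have "h s \<in> {1..r - 1} \<and> A s - {e} \<subseteq> B (h s)" if s: "s \<in> {1..r} - {p}" for s
  proof (cases "s \<le> k")
    case True
    then have "s \<in> {1..k} - {p}" using s by simp
    note gs = g[rule_format, OF this]
    have "i (g s) \<in> {1..r}" "j (g s) \<in> {1..r}" using gs k_range by auto
    then have sub: "A (i (g s)) \<union> A (j (g s)) - {e} \<subseteq> E - {e}" using A_subset by blast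
    have "B (g s) = mcl (E - {e}) (del_indep indep e) (A (i (g s)) \<union> A (j (g s)) - {e})"
      using gs unfolding B_def by simp
    then have "A (i (g s)) \<union> A (j (g s)) - {e} \<subseteq> B (g s)"
      using mcl_superset[OF sub, of "del_indep indep e"] by simp
    moreover have "A s - {e} \<subseteq> A (i (g s)) \<union> A (j (g s)) - {e}" using gs by auto
    ultimately have "A s - {e} \<subseteq> B (g s)" by (rule subset_trans[rotated])
    then show ?thesis using True gs k_range unfolding h_def by auto
  next
    case False
    then show ?thesis using s k_range unfolding h_def B_def by auto
  qed
  ultimately show ?thesis using that by blast
qed

lemma B_transversal_if_insert_e:
  assumes "X \<subseteq> E - {e}" and "partial_transversal_on A {1..r} (insert e X)"
  shows "partial_transversal_on B {1..r - 1} X"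
proof -
  obtain \<phi> where \<phi>_inj: "inj_on \<phi> (insert e X)"
    and \<phi>: "\<forall>x\<in>insert e X. \<phi> x \<in> {1..r} \<and> x \<in> A (\<phi> x)"
    using assms(2) unfolding partial_transversal_on_def by blast
  have "\<phi> e \<in> {1..k}" using \<phi> e_in_A_iff by auto
  then obtain h where h_inj: "inj_on h ({1..r} - {\<phi> e})"
    and h: "\<forall>s\<in>{1..r} - {\<phi> e}. h s \<in> {1..r - 1} \<and> A s - {e} \<subseteq> B (h s)"
    by (rule B_reindexing)
  have \<phi>_X: "\<phi> x \<in> {1..r} - {\<phi> e}" if "x \<in> X" for x
  proof -
    have "x \<noteq> e" using that assms(1) by blast
    then have "\<phi> x \<noteq> \<phi> e" using inj_on_contraD[OF \<phi>_inj] that by blast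
    then show ?thesis using \<phi> that by simp
  qed
  have "inj_on (h \<circ> \<phi>) X"
    using \<phi>_X by (intro comp_inj_on inj_on_subset[OF \<phi>_inj] inj_on_subset[OF h_inj]) auto
  moreover have "(h \<circ> \<phi>) x \<in> {1..r - 1} \<and> x \<in> B ((h \<circ> \<phi>) x)" if "x \<in> X" for x
  proof -
    have "x \<in> A (\<phi> x) - {e}" using \<phi> that assms(1) by auto
    then show ?thesis using h[rule_format, OF \<phi>_X[OF that]] by auto
  qed
  ultimately show ?thesis
    unfolding partial_transversal_on_def by (intro exI[of _ "h \<circ> \<phi>"]) blast
qed

lemma k_subset_neighbours: "e \<in> C \<Longrightarrow> {1..k} \<subseteq> neighbours A {1..r} C"
  using k_range e_in_A_iff unfolding neighbours_def by fastforce

lemma neighbours_B_Diff_e_subset: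
  "neighbours B {1..r - 1} (C - {e}) \<subseteq> {1..k - 1} \<union> (\<lambda>t. t - 1) ` (neighbours A {1..r} C - {1..k})"
proof
  fix t assume "t \<in> neighbours B {1..r - 1} (C - {e})"
  then have t: "t \<in> {1..r - 1}" and meets: "B t \<inter> (C - {e}) \<noteq> {}"
    unfolding neighbours_def by auto
  show "t \<in> {1..k - 1} \<union> (\<lambda>t. t - 1) ` (neighbours A {1..r} C - {1..k})"
  proof (cases "t \<le> k - 1")
    case False
    then have "B t = A (t + 1)" unfolding B_def by simp
    then have "t + 1 \<in> neighbours A {1..r} C - {1..k}"
      using t meets False unfolding neighbours_def by auto
    then have "t \<in> (\<lambda>t. t - 1) ` (neighbours A {1..r} C - {1..k})" by (rule image_eqI[rotated]) simp
    then show ?thesis by blast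
  qed (use t in simp)
qed

lemma card_neighbours_B_Diff_e:
  assumes "e \<in> C"
  shows "card (neighbours B {1..r - 1} (C - {e})) + 1 \<le> card (neighbours A {1..r} C)"
proof -
  let ?N = "neighbours A {1..r} C"
  have "finite ?N" unfolding neighbours_def by simp
  have "card (neighbours B {1..r - 1} (C - {e})) \<le> card ({1..k - 1} \<union> (\<lambda>t. t - 1) ` (?N - {1..k}))"
    using neighbours_B_Diff_e_subset \<open>finite ?N\<close> by (intro card_mono) simp_all
  also have "\<dots> \<le> card {1..k - 1} + card ((\<lambda>t. t - 1) ` (?N - {1..k}))"
    by (rule card_Un_le)
  also have "\<dots> \<le> (k - 1) + card (?N - {1..k})"
    using card_image_le[of "?N - {1..k}" "\<lambda>t. t - 1"] \<open>finite ?N\<close> by simp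
  also have "card (?N - {1..k}) = card ?N - k"
    using k_subset_neighbours[OF assms] \<open>finite ?N\<close> by (simp add: card_Diff_subset)
  finally show ?thesis
    using k_range card_mono[OF \<open>finite ?N\<close> k_subset_neighbours[OF assms]] by simp
qed

lemma connected_flat_vertices:
  assumes "mcl E indep F \<subseteq> F"
  shows "connected_induced Ed {a \<in> {1..k}. A a \<subseteq> F}"
  unfolding connected_induced_def
proof (intro ballI)
  let ?P = "{a \<in> {1..k}. A a \<subseteq> F}"
  fix a b assume a: "a \<in> ?P" and b: "b \<in> ?P"
  show "(a, b) \<in> (induced_adj Ed ?P)\<^sup>*"
  proof (cases "a = b")
    case False
    define U where "U = Ae A r e (mcl E indep (A a \<union> A b))"
    have "a \<in> {1..k}" "b \<in> {1..k}" using a b by auto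
    then have "connected_induced Ed U"
      using presenting[unfolded presenting_def, THEN conjunct2] False unfolding U_def by blast
    have ar: "a \<in> {1..r}" "b \<in> {1..r}" using a b k_range by auto
    have "e \<in> A a" "e \<in> A b" using e_in_A_iff[OF ar(1)] e_in_A_iff[OF ar(2)] a b by auto
    moreover have "A a \<union> A b \<subseteq> mcl E indep (A a \<union> A b)"
      using A_subset[OF ar(1)] A_subset[OF ar(2)] by (intro mcl_superset) blast
    ultimately have ab_U: "a \<in> U" "b \<in> U" unfolding U_def Ae_def using ar by auto
    have cl_F: "mcl E indep (A a \<union> A b) \<subseteq> F"
      using mcl_mono[OF matroid, of "A a \<union> A b" F] a b assms by auto
    have "U \<subseteq> ?P"
    proof
      fix t assume "t \<in> U"
      then have "t \<in> {1..r}" "e \<in> A t" "A t \<subseteq> mcl E indep (A a \<union> A b)"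
        unfolding U_def Ae_def by auto
      then show "t \<in> ?P" using e_in_A_iff[of t] cl_F by auto
    qed
    moreover have "(a, b) \<in> (induced_adj Ed U)\<^sup>*"
      using \<open>connected_induced Ed U\<close> ab_U unfolding connected_induced_def by blast
    ultimately show ?thesis by (rule induced_adj_rtrancl_mono)
  qed simp
qed

lemma card_flat_vertices_le:
  assumes flat: "mcl E indep F \<subseteq> F"
  shows "card {a \<in> {1..k}. A a \<subseteq> F} \<le> card {t \<in> {1..k - 1}. B t \<subseteq> F} + 1"
proof (cases "{a \<in> {1..k}. A a \<subseteq> F} = {}")
  case False
  let ?P = "{a \<in> {1..k}. A a \<subseteq> F}"
  obtain p0 where "p0 \<in> ?P" using False by blast
  obtain g where g_inj: "inj_on g (?P - {p0})"
    and g: "\<forall>v\<in>?P - {p0}. g v \<in> {1..k - 1} \<and> v \<in> {i (g v), j (g v)} \<and> {i (g v), j (g v)} \<subseteq> ?P"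
    by (rule connected_induced_parent_edges[OF connected_flat_vertices[OF flat] \<open>p0 \<in> ?P\<close> edges])
  have "g v \<in> {1..k - 1} \<and> B (g v) \<subseteq> F" if v: "v \<in> ?P - {p0}" for v
  proof -
    note gv = g[rule_format, OF v]
    then have "A (i (g v)) \<union> A (j (g v)) - {e} \<subseteq> F" by auto
    then have "mcl E indep (A (i (g v)) \<union> A (j (g v)) - {e}) \<subseteq> F"
      using mcl_mono[OF matroid] flat by (meson subset_trans)
    moreover have "B (g v) = mcl (E - {e}) (del_indep indep e) (A (i (g v)) \<union> A (j (g v)) - {e})"
      using gv unfolding B_def by simp
    ultimately have "B (g v) \<subseteq> F"
      using mcl_del_indep_subset[of e "A (i (g v)) \<union> A (j (g v)) - {e}" E indep] by blast
    then show ?thesis using gv by simp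
  qed
  then have "g ` (?P - {p0}) \<subseteq> {t \<in> {1..k - 1}. B t \<subseteq> F}" by blast
  then have "card (g ` (?P - {p0})) \<le> card {t \<in> {1..k - 1}. B t \<subseteq> F}"
    by (intro card_mono) simp_all
  moreover have "card (g ` (?P - {p0})) = card ?P - 1"
    using card_image[OF g_inj] \<open>p0 \<in> ?P\<close> by simp
  ultimately show ?thesis by linarith
next
  case True
  then show ?thesis unfolding True by simp
qed

lemma card_flat_indices_le:
  assumes flat: "mcl E indep F \<subseteq> F"
  shows "card {t \<in> {1..r}. A t \<subseteq> F} \<le> card {t \<in> {1..r - 1}. B t \<subseteq> F} + 1"
proof -
  let ?P = "{a \<in> {1..k}. A a \<subseteq> F}" and ?Q = "{t \<in> {k + 1..r}. A t \<subseteq> F}"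
  let ?P' = "{t \<in> {1..k - 1}. B t \<subseteq> F}" and ?Q' = "{t \<in> {k..r - 1}. B t \<subseteq> F}"
  have "card ?Q \<le> card ?Q'"
  proof (rule card_inj_on_le)
    show "inj_on (\<lambda>t. t - 1) ?Q" by (rule inj_onI) auto
    show "(\<lambda>t. t - 1) ` ?Q \<subseteq> ?Q'"
    proof
      fix s assume "s \<in> (\<lambda>t. t - 1) ` ?Q"
      then obtain t where t: "t \<in> {k + 1..r}" "A t \<subseteq> F" "s = t - 1" by blast
      then have "B s = A t" using k_range unfolding B_def by auto
      then show "s \<in> ?Q'" using t by auto
    qed
  qed simp
  moreover have "card {t \<in> {1..r}. A t \<subseteq> F} = card ?P + card ?Q"
  proof -
    have "{t \<in> {1..r}. A t \<subseteq> F} = ?P \<union> ?Q" using k_range by auto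
    moreover have "finite ?P" "finite ?Q" "?P \<inter> ?Q = {}"
      by (auto intro: finite_subset[OF _ finite_atLeastAtMost])
    ultimately show ?thesis by (simp add: card_Un_disjoint)
  qed
  moreover have "card {t \<in> {1..r - 1}. B t \<subseteq> F} = card ?P' + card ?Q'"
  proof -
    have "{t \<in> {1..r - 1}. B t \<subseteq> F} = ?P' \<union> ?Q'" using k_range by auto
    moreover have "finite ?P'" "finite ?Q'" "?P' \<inter> ?Q' = {}"
      using k_range by (auto intro: finite_subset[OF _ finite_atLeastAtMost])
    ultimately show ?thesis by (simp add: card_Un_disjoint)
  qed
  ultimately show ?thesis using card_flat_vertices_le[OF flat] by linarith
qed

lemma card_neighbours_B_le:
  assumes "circuit E (dual_indep E indep) C" and "e \<notin> C"
  shows "card (neighbours B {1..r - 1} C) \<le> card (neighbours A {1..r} C)"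
proof -
  let ?A' = "{t \<in> {1..r}. A t \<subseteq> E - C}" and ?B' = "{t \<in> {1..r - 1}. B t \<subseteq> E - C}"
  have "finite ?A'" "finite ?B'" by (rule finite_subset[OF _ finite_atLeastAtMost], blast)+
  have "A t \<inter> C \<noteq> {} \<longleftrightarrow> \<not> A t \<subseteq> E - C" if "t \<in> {1..r}" for t
    using A_subset[OF that] by blast
  then have "neighbours A {1..r} C = {1..r} - ?A'" unfolding neighbours_def by blast
  then have card_A: "card (neighbours A {1..r} C) = r - card ?A'"
    using card_Diff_subset[OF \<open>finite ?A'\<close>, of "{1..r}"] by (simp add: subset_iff)
  have "B t \<inter> C \<noteq> {} \<longleftrightarrow> \<not> B t \<subseteq> E - C" if "t \<in> {1..r - 1}" for t
    using B_subset[OF that] by blast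
  then have "neighbours B {1..r - 1} C = {1..r - 1} - ?B'" unfolding neighbours_def by blast
  then have card_B: "card (neighbours B {1..r - 1} C) = (r - 1) - card ?B'"
    using card_Diff_subset[OF \<open>finite ?B'\<close>, of "{1..r - 1}"] by (simp add: subset_iff)
  have "card ?B' \<le> r - 1" using card_mono[of "{1..r - 1}" ?B'] by (simp add: subset_iff)
  moreover have "card ?A' \<le> card ?B' + 1"
    by (rule card_flat_indices_le[OF mcl_compl_dual_circuit[OF assms(1)]])
  ultimately show ?thesis unfolding card_A card_B by linarith
qed

lemma insert_e_transversal_if_B:
  assumes X: "X \<subseteq> E - {e}" and B_match: "partial_transversal_on B {1..r - 1} X"
  shows "partial_transversal_on A {1..r} (insert e X)"
proof (rule ccontr)
  assume no_match: "\<not> partial_transversal_on A {1..r} (insert e X)"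
  have "finite (insert e X)"
    using X e_in_E by (intro finite_subset[OF _ finite_ground]) blast
  obtain C where C: "C \<subseteq> insert e X" "\<not> partial_transversal_on A {1..r} C"
    "\<forall>c\<in>C. partial_transversal_on A {1..r} (C - {c})"
    using minimal_non_transversal_exists[OF \<open>finite (insert e X)\<close> no_match] by blast
  have "finite C" using C(1) \<open>finite (insert e X)\<close> by (rule finite_subset)
  have deficient: "card (neighbours A {1..r} C) < card C"
    by (rule card_neighbours_less_if_minimal_non_transversal[OF _ \<open>finite C\<close> C(2,3)]) simp
  show False
  proof (cases "e \<in> C")
    case True
    have "card (C - {e}) \<le> card (neighbours B {1..r - 1} (C - {e}))"
      using C(1) by (intro card_le_card_neighbours[OF _ B_match]) auto
    then show False
      using card_neighbours_B_Diff_e[OF True] deficient \<open>finite C\<close> True by simp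
  next
    case False
    have "C \<subseteq> E" using C(1) X e_in_E by blast
    then have "circuit E (dual_indep E indep) C"
      using C(2,3) unfolding circuit_def dual_indep_iff by auto
    then have "card (neighbours B {1..r - 1} C) \<le> card (neighbours A {1..r} C)"
      using False by (rule card_neighbours_B_le)
    moreover have "card C \<le> card (neighbours B {1..r - 1} C)"
      using C(1) False by (intro card_le_card_neighbours[OF _ B_match]) auto
    ultimately show False using deficient by linarith
  qed
qed

theorem deletion_dual_presentation:
  "is_presentation (E - {e}) (dual_indep (E - {e}) (del_indep indep e)) B (r - 1)"
  unfolding is_presentation_def
proof (intro conjI ballI allI)
  fix X
  show "dual_indep (E - {e}) (del_indep indep e) X \<longleftrightarrow> X \<subseteq> E - {e} \<and> partial_transversal B (r - 1) X"
  proof (cases "X \<subseteq> E - {e}")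
    case True
    have "finite X" using True by (intro finite_subset[OF _ finite_ground]) blast
    have "dual_indep (E - {e}) (del_indep indep e) X \<longleftrightarrow> partial_transversal_on A {1..r} (insert e X)"
      using dual_indep_del_iff[OF e_not_coloop True] dual_indep_iff True e_in_E by blast
    also have "\<dots> \<longleftrightarrow> partial_transversal_on B {1..r - 1} X"
      using B_transversal_if_insert_e[OF True] insert_e_transversal_if_B[OF True] by blast
    finally show ?thesis using True \<open>finite X\<close> unfolding partial_transversal_iff by blast
  qed (auto simp: dual_indep_def)
qed (rule B_subset)

end

theorem lemma3p4:
  fixes E :: "'a set" and indep :: "'a set \<Rightarrow> bool" and A :: "nat \<Rightarrow> 'a set"
    and r k :: nat and e :: 'a and Ed :: "nat set set" and i j :: "nat \<Rightarrow> nat"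
  assumes "matroid E indep"
    and "maximal_presentation_of_dual E indep A r"
    and "r = mrank (dual_indep E indep) E"
    and "e \<in> E"
    and "k \<in> {1..r}"
    and "\<forall>t\<in>{1..r}. e \<in> A t \<longleftrightarrow> t \<le> k"
    and "minimal_presenting E indep A r e k Ed"
    and "is_tree {1..k} Ed"
    and "Ed = (\<lambda>t. {i t, j t}) ` {1..k - 1}"
    and "inj_on (\<lambda>t. {i t, j t}) {1..k - 1}"
  shows "is_presentation (E - {e}) (dual_indep (E - {e}) (del_indep indep e))
           (\<lambda>t. if t \<le> k - 1
                 then mcl (E - {e}) (del_indep indep e) (A (i t) \<union> A (j t) - {e})
                 else A (t + 1))
           (r - 1)"
proof -
  interpret tree_presentation E indep A r k e Ed i j
    using assms unfolding maximal_presentation_of_dual_def minimal_presenting_def is_tree_def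
    by unfold_locales auto
  show ?thesis using deletion_dual_presentation unfolding B_def .
qed

end
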